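(* Let $\mathbb{P}$ be a probability measure on a space $\mathcal{Z}$, $L\colon\mathcal{Z}\to\mathbb{R}$, $\gamma>0$, and $\varphi\in\Phi$. Consider the problem $$\min_{\rho\colon\mathcal{Z}\to\mathbb{R}_{\ge0}}\ \mathbb{E}_{\mathbb{P}}[\rho(\mathsf{Z})L(\mathsf{Z})]+\gamma\,D_\varphi(\rho\cdot\mathbb{P}\,\|\,\mathbb{P})\quad\text{s.t.}\quad\mathbb{E}_{\mathbb{P}}[\rho(\mathsf{Z})]=1.$$ Suppose there exists $b\in\mathbb{R}$ such that: $\mathbb{E}_{\mathbb{P}}[(\gamma\varphi_\uparrow)^*(b-L(\mathsf{Z}))]<+\infty$; the right derivative $(\varphi^* )'_+$ exists $\mathbb{P}$-almost surely at $\frac{b-L(\mathsf{Z})}{\gamma}$; $$\mathbb{E}_{\mathbb{P}}\Big[\Big|(\gamma\varphi_\uparrow)^*(b-L(\mathsf{Z}))-\max\Big\{0,(\varphi^* )'_+\Big(\tfrac{b-L(\mathsf{Z})}{\gamma}\Big)\Big\}\cdot(b-L(\mathsf{Z}))\Big|\Big]<+\infty;$$ and $\mathbb{E}_{\mathbb{P}}\big[\max\{0,(\varphi^* )'_+(\tfrac{b-L(\mathsf{Z})}{\gamma})\}\big]=1$. Then an optimal ratio of the problem is $$\rho^\star(z)=\max\Big\{0,(\varphi^* )'_+\Big(\frac{b-L(z)}{\gamma}\Big)\Big\}.$$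
   Context: $\Phi$ is the set of proper convex lower semi-continuous $\varphi\colon\mathbb{R}\to(-\infty,+\infty]$ with $\varphi(1)=0$ and $\varphi(\mathbb{R}_{\ge0})\subset\mathbb{R}$. The $\varphi$-divergence is $D_\varphi(\mathbb{P}'\|\mathbb{Q})=\int\varphi(\tfrac{\mathrm{d}\mathbb{P}'}{\mathrm{d}\mathbb{Q}})\,\mathrm{d}\mathbb{Q}$. $\varphi_\uparrow(x)=\varphi(x)$ for $x\ge0$ and $+\infty$ for $x<0$. The convex conjugate is $g^*(p)=\sup_{x\in\mathbb{R}}\{xp-g(x)\}$, and $g'_+(x)=\lim_{h\downarrow0}(g(x+h)-g(x))/h$ is the right derivative. *)

theory Defs
  imports "HOL-Probability.Probability"
begin

(* Functions R -> (-inf,+inf] are modelled as real => ereal. *)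

definition ereal_convex :: "(real \<Rightarrow> ereal) \<Rightarrow> bool" where
  "ereal_convex f \<longleftrightarrow>
     (\<forall>x y t. 0 \<le> t \<and> t \<le> 1 \<longrightarrow>
        f (t * x + (1 - t) * y) \<le> ereal t * f x + ereal (1 - t) * f y)"

definition ereal_lsc :: "(real \<Rightarrow> ereal) \<Rightarrow> bool" where
  "ereal_lsc f \<longleftrightarrow> (\<forall>x. f x \<le> Liminf (at x) f)"

definition ereal_proper :: "(real \<Rightarrow> ereal) \<Rightarrow> bool" where
  "ereal_proper f \<longleftrightarrow> (\<forall>x. f x \<noteq> -\<infinity>) \<and> (\<exists>x. f x \<noteq> \<infinity>)"

definition Phi :: "(real \<Rightarrow> ereal) set" where
  "Phi = {\<phi>. ereal_proper \<phi> \<and> ereal_convex \<phi> \<and> ereal_lsc \<phi> \<and> \<phi> 1 = 0 \<and>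
              (\<forall>x\<ge>0. \<phi> x \<noteq> \<infinity> \<and> \<phi> x \<noteq> -\<infinity>)}"

definition phi_up :: "(real \<Rightarrow> ereal) \<Rightarrow> real \<Rightarrow> ereal" where
  "phi_up \<phi> x = (if 0 \<le> x then \<phi> x else \<infinity>)"

definition cconj :: "(real \<Rightarrow> ereal) \<Rightarrow> real \<Rightarrow> ereal" where
  "cconj g p = (SUP x. ereal (x * p) - g x)"

definition has_right_deriv :: "(real \<Rightarrow> ereal) \<Rightarrow> real \<Rightarrow> real \<Rightarrow> bool" where
  "has_right_deriv g x d \<longleftrightarrow>
     \<bar>g x\<bar> \<noteq> \<infinity> \<and> ((\<lambda>h. (g (x + h) - g x) / ereal h) \<longlongrightarrow> ereal d) (at_right 0)"

definition right_deriv_exists :: "(real \<Rightarrow> ereal) \<Rightarrow> real \<Rightarrow> bool" where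
  "right_deriv_exists g x \<longleftrightarrow> (\<exists>d. has_right_deriv g x d)"

definition right_deriv :: "(real \<Rightarrow> ereal) \<Rightarrow> real \<Rightarrow> real" where
  "right_deriv g x = (THE d. has_right_deriv g x d)"

text \<open>Extended-valued expectation E[f] = E[f^+] - E[f^-] (with the ereal
  convention infinity - infinity = infinity).\<close>
definition qint :: "'a measure \<Rightarrow> ('a \<Rightarrow> ereal) \<Rightarrow> ereal" where
  "qint M f = enn2ereal (\<integral>\<^sup>+ z. e2ennreal (f z) \<partial>M) - enn2ereal (\<integral>\<^sup>+ z. e2ennreal (- f z) \<partial>M)"

definition phi_div :: "(real \<Rightarrow> ereal) \<Rightarrow> 'a measure \<Rightarrow> 'a measure \<Rightarrow> ereal" where
  "phi_div \<phi> P' Q = qint Q (\<lambda>z. \<phi> (enn2real (RN_deriv Q P' z)))"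

definition feasible_ratio :: "'a measure \<Rightarrow> ('a \<Rightarrow> real) \<Rightarrow> bool" where
  "feasible_ratio P \<rho> \<longleftrightarrow> \<rho> \<in> borel_measurable P \<and> (\<forall>z\<in>space P. 0 \<le> \<rho> z) \<and>
      (\<integral>\<^sup>+ z. ennreal (\<rho> z) \<partial>P) = 1"

definition objective :: "'a measure \<Rightarrow> ('a \<Rightarrow> real) \<Rightarrow> real \<Rightarrow> (real \<Rightarrow> ereal) \<Rightarrow> ('a \<Rightarrow> real) \<Rightarrow> ereal" where
  "objective P L \<gamma> \<phi> \<rho> =
     qint P (\<lambda>z. ereal (\<rho> z * L z)) + ereal \<gamma> * phi_div \<phi> (density P (\<lambda>z. ennreal (\<rho> z))) P"

definition optimal_ratio :: "'a measure \<Rightarrow> ('a \<Rightarrow> real) \<Rightarrow> real \<Rightarrow> (real \<Rightarrow> ereal) \<Rightarrow> ('a \<Rightarrow> real) \<Rightarrow> bool" where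
  "optimal_ratio P L \<gamma> \<phi> \<rho> \<longleftrightarrow> feasible_ratio P \<rho> \<and>
     (\<forall>\<rho>'. feasible_ratio P \<rho>' \<longrightarrow> objective P L \<gamma> \<phi> \<rho> \<le> objective P L \<gamma> \<phi> \<rho>')"

end

theory Submission
  imports Defs
begin

(* The problem is dual to maximising b - E[(gamma phi_up)^*(b - L)]. By the Fenchel-Young
   inequality, rho (b - L) - gamma phi(rho) <= (gamma phi_up)^*(b - L) pointwise for every
   rho >= 0, so integrating and using E[rho] = 1 bounds the objective of every feasible ratio
   below by b - E[(gamma phi_up)^*(b - L)]. The candidate attains this bound pointwise: if phi^*
   has right derivative d at p, then, by monotonicity of the difference quotients of phi^*,
   near-maximisers of the supremum defining phi^*(p + h) approach d as h -> 0, so lower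
   semicontinuity makes d a maximiser for phi^*(p); convexity of phi then shows that max 0 d
   maximises x p - phi x over x >= 0. The integrability hypotheses make both sides finite. *)

lemma ereal_lsc_eventually_greater:
  assumes "ereal_lsc f" and "a < f x"
  shows "eventually (\<lambda>y. a < f y) (nhds x)"
proof -
  have "a < Liminf (at x) f"
    using assms unfolding ereal_lsc_def by (meson order_less_le_trans)
  then have "eventually (\<lambda>y. a < f y) (at x)"
    using le_Liminf_iff by blast
  with assms(2) show ?thesis by (simp add: eventually_nhds_conv_at)
qed

lemma ereal_lsc_borel:
  assumes "ereal_lsc f"
  shows "f \<in> borel_measurable borel"
proof (rule borel_measurableI_greater)
  fix a :: ereal
  have "open {x. a < f x}"
  proof (rule Topological_Spaces.openI)
    fix x assume "x \<in> {x. a < f x}"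
    then obtain T where "open T" "x \<in> T" "\<forall>y\<in>T. a < f y"
      using ereal_lsc_eventually_greater[OF assms, of a x] unfolding eventually_nhds by auto
    then show "\<exists>T. open T \<and> x \<in> T \<and> T \<subseteq> {x. a < f x}" by auto
  qed
  then show "{x \<in> space borel. a < f x} \<in> sets borel" by simp
qed

lemma ereal_convex_three_point:
  assumes "ereal_convex f" and "f a = ereal A" and "f b = ereal B" and "f c = ereal C"
    and "a \<le> b" and "b \<le> c" and "a < c"
  shows "(c - a) * B \<le> (c - b) * A + (b - a) * C"
proof -
  define t where "t = (c - b) / (c - a)"
  have t_scaled: "t * (c - a) = c - b" using assms(7) by (simp add: t_def)
  then have "t * a + (1 - t) * c = b" by (simp add: algebra_simps)
  moreover have "0 \<le> t" "t \<le> 1" using assms(5-7) by (auto simp: t_def)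
  ultimately have "f b \<le> ereal t * f a + ereal (1 - t) * f c"
    using ereal_convex_def[THEN iffD1, OF assms(1), rule_format, of t a c] by simp
  then have "B \<le> t * A + (1 - t) * C" using assms(2-4) by simp
  then have "(c - a) * B \<le> (c - a) * (t * A + (1 - t) * C)"
    using assms(7) by (intro mult_left_mono) auto
  also have "\<dots> = (t * (c - a)) * A + ((c - a) - t * (c - a)) * C"
    by (simp add: algebra_simps)
  also have "\<dots> = (c - b) * A + (b - a) * C"
    by (simp add: t_scaled)
  finally show ?thesis .
qed

section \<open>Convex conjugates\<close>

lemma cconj_upper: "ereal (x * q) - f x \<le> cconj f q"
  unfolding cconj_def by (rule SUP_upper) simp

lemma cconj_le_ereal:
  assumes "\<And>x. f x \<noteq> -\<infinity>" and "\<And>x c. f x = ereal c \<Longrightarrow> x * q - c \<le> B"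
  shows "cconj f q \<le> ereal B"
  unfolding cconj_def
proof (rule SUP_least)
  fix x
  show "ereal (x * q) - f x \<le> ereal B"
    using assms[of x] by (cases "f x") auto
qed

lemma cconj_neq_MInf:
  assumes "ereal_proper f"
  shows "cconj f q \<noteq> -\<infinity>"
proof -
  obtain x where "f x \<noteq> \<infinity>" using assms by (auto simp: ereal_proper_def)
  then have "ereal (x * q) - f x \<noteq> -\<infinity>" by (cases "f x") auto
  with cconj_upper[of x q f] show ?thesis by auto
qed

lemma cconj_convex:
  assumes "ereal_proper f" and "cconj f a = ereal A" and "cconj f c = ereal C"
    and "0 \<le> t" and "t \<le> 1"
  shows "cconj f (t * a + (1 - t) * c) \<le> ereal (t * A + (1 - t) * C)"
proof (rule cconj_le_ereal)
  show "f x \<noteq> -\<infinity>" for x using assms(1) by (simp add: ereal_proper_def)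
next
  fix x y assume fx: "f x = ereal y"
  have "x * a - y \<le> A" "x * c - y \<le> C"
    using cconj_upper[of x a f] cconj_upper[of x c f] fx assms(2,3) by simp_all
  then have "t * (x * a - y) + (1 - t) * (x * c - y) \<le> t * A + (1 - t) * C"
    using assms(4,5) by (intro add_mono mult_left_mono) auto
  then show "x * (t * a + (1 - t) * c) - y \<le> t * A + (1 - t) * C"
    by (simp add: algebra_simps)
qed

lemma cconj_borel:
  assumes "\<And>x. f x \<noteq> -\<infinity>"
  shows "cconj f \<in> borel_measurable borel"
proof (rule borel_measurableI_greater)
  fix a :: ereal
  have "open {q. a < ereal (x * q) - f x}" for x
  proof (cases "f x")
    case (real c)
    have "open {q. a < ereal (x * q - c)}"
      by (rule open_Collect_less) (intro continuous_intros)+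
    with real show ?thesis by simp
  qed (use assms in auto)
  moreover have "{q. a < cconj f q} = (\<Union>x. {q. a < ereal (x * q) - f x})"
    unfolding cconj_def by (auto simp: less_SUP_iff)
  ultimately have "open {q. a < cconj f q}" by auto
  then show "{q \<in> space borel. a < cconj f q} \<in> sets borel" by simp
qed

section \<open>Right derivatives of convex conjugates\<close>

definition cconj_quotient :: "(real \<Rightarrow> ereal) \<Rightarrow> real \<Rightarrow> real \<Rightarrow> ereal" where
  "cconj_quotient f p h = (cconj f (p + h) - cconj f p) / ereal h"

lemma cconj_quotient_mono:
  assumes "ereal_proper f" and fp: "cconj f p = ereal c" and "0 < h" and "h \<le> k"
  shows "cconj_quotient f p h \<le> cconj_quotient f p k"
proof (cases "cconj f (p + k)")
  case (real C)
  define t where "t = h / k"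
  have t: "0 \<le> t" "t \<le> 1" "p + h = t * (p + k) + (1 - t) * p"
    using assms(3,4) by (auto simp: t_def field_simps)
  then have "cconj f (p + h) \<le> ereal (t * C + (1 - t) * c)"
    using cconj_convex[OF assms(1) real fp] by simp
  moreover obtain H where H: "cconj f (p + h) = ereal H"
    using calculation cconj_neq_MInf[OF assms(1)] by (cases "cconj f (p + h)") auto
  ultimately have "H - c \<le> t * (C - c)" by (simp add: algebra_simps)
  then have "(H - c) / h \<le> (C - c) / k"
    using assms(3,4) by (simp add: t_def field_simps)
  then show ?thesis using H real fp assms(3,4) by (simp add: cconj_quotient_def)
next
  case PInf
  then show ?thesis using assms(3,4) fp by (simp add: cconj_quotient_def)
next
  case MInf
  then show ?thesis using cconj_neq_MInf[OF assms(1)] by simp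
qed

lemma cconj_quotient_tendsto_INF:
  assumes "ereal_proper f" and "cconj f p = ereal c"
  shows "(cconj_quotient f p \<longlongrightarrow> (INF n::nat. cconj_quotient f p (1 / Suc n))) (at_right 0)"
proof -
  let ?Q = "cconj_quotient f p"
  have mono: "0 < h \<Longrightarrow> h \<le> k \<Longrightarrow> ?Q h \<le> ?Q k" for h k
    using cconj_quotient_mono[OF assms] .
  have "(?Q \<longlongrightarrow> Inf (?Q ` ({0<..} \<inter> UNIV))) (at 0 within ({0<..} \<inter> UNIV))"
    by (rule Lim_right_bound[where K="-\<infinity>"]) (auto intro: mono)
  moreover have "Inf (?Q ` {0<..}) = (INF n::nat. ?Q (1 / Suc n))"
  proof (rule antisym)
    show "Inf (?Q ` {0<..}) \<le> (INF n::nat. ?Q (1 / Suc n))"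
      by (rule INF_greatest, rule INF_lower) auto
    show "(INF n::nat. ?Q (1 / Suc n)) \<le> Inf (?Q ` {0<..})"
    proof (rule INF_greatest)
      fix h :: real assume "h \<in> {0<..}"
      moreover obtain n :: nat where "1 / h < n" using reals_Archimedean2 by blast
      ultimately have "?Q (1 / Suc n) \<le> ?Q h" by (intro mono) (auto simp: field_simps)
      then show "(INF n::nat. ?Q (1 / Suc n)) \<le> ?Q h" by (meson INF_lower2 UNIV_I)
    qed
  qed
  ultimately show ?thesis by simp
qed

lemma has_right_deriv_cconj_iff:
  assumes "ereal_proper f"
  shows "has_right_deriv (cconj f) p d \<longleftrightarrow>
     \<bar>cconj f p\<bar> \<noteq> \<infinity> \<and> (INF n::nat. cconj_quotient f p (1 / Suc n)) = ereal d"
proof (cases "\<bar>cconj f p\<bar> = \<infinity>")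
  case False
  then obtain c where c: "cconj f p = ereal c" by (cases "cconj f p") auto
  note lim = cconj_quotient_tendsto_INF[OF assms c]
  have "has_right_deriv (cconj f) p d \<longleftrightarrow> (cconj_quotient f p \<longlongrightarrow> ereal d) (at_right 0)"
    using c by (simp add: has_right_deriv_def cconj_quotient_def[abs_def])
  also have "\<dots> \<longleftrightarrow> (INF n::nat. cconj_quotient f p (1 / Suc n)) = ereal d"
  proof
    assume "(cconj_quotient f p \<longlongrightarrow> ereal d) (at_right 0)"
    with lim show "(INF n::nat. cconj_quotient f p (1 / Suc n)) = ereal d"
      by (rule tendsto_unique[OF trivial_limit_at_right_real])
  qed (use lim in simp)
  finally show ?thesis using c by simp
qed (simp add: has_right_deriv_def)

lemma right_deriv_eqI:
  assumes "has_right_deriv g p d"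
  shows "right_deriv g p = d"
  unfolding right_deriv_def
proof (rule the_equality)
  fix d' assume "has_right_deriv g p d'"
  then have "((\<lambda>h. (g (p + h) - g p) / ereal h) \<longlongrightarrow> ereal d') (at_right 0)"
    by (simp add: has_right_deriv_def)
  moreover have "((\<lambda>h. (g (p + h) - g p) / ereal h) \<longlongrightarrow> ereal d) (at_right 0)"
    using assms by (simp add: has_right_deriv_def)
  ultimately have "ereal d' = ereal d"
    by (rule tendsto_unique[OF trivial_limit_at_right_real])
  then show "d' = d" by simp
qed (fact assms)

(* Where no right derivative exists, right_deriv is the unspecified constant THE d. False;
   this case split exhibits right_deriv (cconj f) as a Borel function. *)
lemma right_deriv_cconj_eq:
  assumes "ereal_proper f"
  shows "right_deriv (cconj f) p =
    (if \<bar>cconj f p\<bar> \<noteq> \<infinity> \<and> \<bar>INF n::nat. cconj_quotient f p (1 / Suc n)\<bar> \<noteq> \<infinity>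
     then real_of_ereal (INF n::nat. cconj_quotient f p (1 / Suc n)) else (THE d. False))"
proof (cases "\<bar>cconj f p\<bar> \<noteq> \<infinity> \<and> \<bar>INF n::nat. cconj_quotient f p (1 / Suc n)\<bar> \<noteq> \<infinity>")
  case True
  then have "has_right_deriv (cconj f) p (real_of_ereal (INF n::nat. cconj_quotient f p (1 / Suc n)))"
    by (subst has_right_deriv_cconj_iff[OF assms]) (simp add: ereal_real)
  with True show ?thesis by (simp add: right_deriv_eqI)
next
  case False
  then have "has_right_deriv (cconj f) p = (\<lambda>d. False)"
    by (auto simp: has_right_deriv_cconj_iff[OF assms])
  with False show ?thesis unfolding right_deriv_def by auto
qed

lemma right_deriv_cconj_borel:
  assumes "ereal_proper f"
  shows "right_deriv (cconj f) \<in> borel_measurable borel"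
proof -
  have [measurable]: "cconj f \<in> borel_measurable borel"
    using assms by (intro cconj_borel) (simp add: ereal_proper_def)
  have [measurable]: "(\<lambda>p. cconj_quotient f p (1 / Suc n)) \<in> borel_measurable borel" for n
    unfolding cconj_quotient_def by measurable
  show ?thesis
    by (subst right_deriv_cconj_eq[OF assms, abs_def]) measurable
qed

lemma cconj_quotient_bounds:
  assumes "ereal_proper f" and fp: "cconj f p = ereal c" and "0 < h"
  shows "cconj_quotient f p h < ereal a \<Longrightarrow> cconj f (p + h) < ereal (c + h * a)"
    and "ereal a < cconj_quotient f p h \<Longrightarrow> ereal (c + h * a) < cconj f (p + h)"
proof -
  consider (real) H where "cconj f (p + h) = ereal H" | (top) "cconj f (p + h) = \<infinity>"
    using cconj_neq_MInf[OF assms(1), of "p + h"] by (cases "cconj f (p + h)") auto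
  note value_cases = this
  show "cconj_quotient f p h < ereal a \<Longrightarrow> cconj f (p + h) < ereal (c + h * a)"
    by (cases rule: value_cases) (use fp \<open>0 < h\<close> in \<open>auto simp: cconj_quotient_def field_simps\<close>)
  show "ereal a < cconj_quotient f p h \<Longrightarrow> ereal (c + h * a) < cconj f (p + h)"
    by (cases rule: value_cases) (use fp \<open>0 < h\<close> in \<open>auto simp: cconj_quotient_def field_simps\<close>)
qed

(* y - x * p + c is the gap by which the point x with f x = y misses the supremum
   c = cconj f p; lower says that x nearly attains cconj f (p + h), and upper comes from
   the bound on the difference quotient of cconj f at k. *)
lemma near_maximizer_bounds:
  fixes x y d p c h k \<tau> :: real
  assumes "0 < h" and "2 * h \<le> k" and "0 < \<tau>"
    and lower: "c + h * (d - 2 * \<tau>) < x * (p + h) - y"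
    and upper: "x * (p + k) - y < c + k * (d + \<tau>)"
    and gap_nonneg: "x * p - y \<le> c"
  shows "\<bar>x - d\<bar> < 4 * \<tau>" and "y - x * p + c < 6 * \<tau> * h"
proof -
  define u g where "u = x - d" and "g = y - x * p + c"
  have g_lower: "k * (u - \<tau>) < g" and g_upper: "g < h * (u + 2 * \<tau>)" and "0 \<le> g"
    using lower upper gap_nonneg by (simp_all add: u_def g_def algebra_simps)
  have "- 2 * \<tau> < u"
  proof (rule ccontr)
    assume "\<not> - 2 * \<tau> < u"
    then have "h * (u + 2 * \<tau>) \<le> 0" using \<open>0 < h\<close> by (simp add: mult_nonneg_nonpos)
    with g_upper \<open>0 \<le> g\<close> show False by simp
  qed
  moreover have "u < 4 * \<tau>"
  proof (rule ccontr)
    assume "\<not> u < 4 * \<tau>"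
    then have "h * (u + 2 * \<tau>) \<le> h * (2 * (u - \<tau>))" and "(2 * h) * (u - \<tau>) \<le> k * (u - \<tau>)"
      using assms(1-3) by (intro mult_left_mono mult_right_mono; simp)+
    with g_lower g_upper show False by (simp add: algebra_simps)
  qed
  ultimately show "\<bar>x - d\<bar> < 4 * \<tau>" by (simp add: u_def abs_less_iff)
  have "h * (u + 2 * \<tau>) \<le> h * (6 * \<tau>)"
    using \<open>u < 4 * \<tau>\<close> \<open>0 < h\<close> by (intro mult_left_mono) auto
  with g_upper show "y - x * p + c < 6 * \<tau> * h" by (simp add: g_def algebra_simps)
qed

(* Squeezing the difference quotients at h and at k >= 2 h between d - tau and d + tau
   forces every near-maximiser at p + h to lie near d and to be nearly optimal at p. *)
lemma cconj_right_deriv_near_maximizer: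
  assumes proper: "ereal_proper f" and deriv: "has_right_deriv (cconj f) p d"
    and fp: "cconj f p = ereal c" and "0 < \<epsilon>"
  obtains x y where "f x = ereal y" and "\<bar>x - d\<bar> < \<epsilon>" and "y - x * p + c < \<epsilon>"
proof -
  define \<tau> where "\<tau> = \<epsilon> / 6"
  have "\<tau> > 0" using \<open>0 < \<epsilon>\<close> by (simp add: \<tau>_def)
  have "(cconj_quotient f p \<longlongrightarrow> ereal d) (at_right 0)"
    using deriv by (simp add: has_right_deriv_def cconj_quotient_def[abs_def])
  then have "eventually (\<lambda>h. ereal (d - \<tau>) < cconj_quotient f p h \<and>
      cconj_quotient f p h < ereal (d + \<tau>)) (at_right 0)"
    using \<open>\<tau> > 0\<close> by (intro eventually_conj order_tendstoD) auto
  then obtain h0 where "0 < h0" and h0: "\<And>h. 0 < h \<Longrightarrow> h < h0 \<Longrightarrow>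
      ereal (d - \<tau>) < cconj_quotient f p h \<and> cconj_quotient f p h < ereal (d + \<tau>)"
    by (auto simp: eventually_at_right_field)
  define k h where "k = h0 / 2" and "h = min (k / 2) 1"
  have "0 < h" "2 * h \<le> k" "h \<le> 1" "0 < k" "k < h0"
    using \<open>0 < h0\<close> by (auto simp: k_def h_def)
  have upper: "cconj f (p + k) < ereal (c + k * (d + \<tau>))"
    using h0[of k] \<open>0 < k\<close> \<open>k < h0\<close> by (intro cconj_quotient_bounds(1)[OF proper fp]) auto
  have "ereal (c + h * (d - 2 * \<tau>)) < ereal (c + h * (d - \<tau>))"
    using \<open>0 < h\<close> \<open>\<tau> > 0\<close> by simp
  also have "\<dots> < cconj f (p + h)"
    using h0[of h] \<open>0 < h\<close> \<open>2 * h \<le> k\<close> \<open>k < h0\<close>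
    by (intro cconj_quotient_bounds(2)[OF proper fp]) auto
  finally obtain x where x: "ereal (c + h * (d - 2 * \<tau>)) < ereal (x * (p + h)) - f x"
    unfolding cconj_def by (auto simp: less_SUP_iff)
  then obtain y where y: "f x = ereal y"
    using proper by (cases "f x") (auto simp: ereal_proper_def)
  have "ereal (x * (p + k) - y) \<le> cconj f (p + k)" using cconj_upper[of x "p + k" f] y by simp
  then have "ereal (x * (p + k) - y) < ereal (c + k * (d + \<tau>))" using upper by (rule order.strict_trans1)
  then have "x * (p + k) - y < c + k * (d + \<tau>)" by simp
  moreover have "x * p - y \<le> c" using cconj_upper[of x p f] fp y by simp
  ultimately have "\<bar>x - d\<bar> < 4 * \<tau>" and "y - x * p + c < 6 * \<tau> * h"
    using near_maximizer_bounds[OF \<open>0 < h\<close> \<open>2 * h \<le> k\<close> \<open>\<tau> > 0\<close>] x y by auto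
  moreover have "6 * \<tau> * h \<le> \<epsilon>" using \<open>h \<le> 1\<close> \<open>0 < \<epsilon>\<close> by (simp add: \<tau>_def)
  ultimately show ?thesis using that[OF y] \<open>\<tau> > 0\<close> by (simp add: \<tau>_def)
qed

(* Lower semicontinuity at d passes the near-optimality of the points near d given by
   cconj_right_deriv_near_maximizer to d itself. *)
lemma cconj_right_deriv_fenchel_young:
  assumes proper: "ereal_proper f" and "ereal_lsc f" and deriv: "has_right_deriv (cconj f) p d"
  shows "f d + cconj f p = ereal (d * p)"
proof -
  obtain c where fp: "cconj f p = ereal c"
    using deriv by (cases "cconj f p") (auto simp: has_right_deriv_def)
  have "ereal (d * p) - f d \<le> ereal c" using cconj_upper[of d p f] fp by simp
  then have ge: "ereal (d * p - c) \<le> f d" by (cases "f d") auto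
  have le: "f d \<le> ereal (d * p - c)"
  proof (rule ccontr)
    assume "\<not> f d \<le> ereal (d * p - c)"
    then obtain a where "ereal (d * p - c) < ereal a" and "ereal a < f d"
      using ereal_dense2 by (meson not_le)
    then have "d * p - c < a" by simp
    obtain \<delta> where "0 < \<delta>" and \<delta>: "\<And>x. dist x d < \<delta> \<Longrightarrow> ereal a < f x"
      using ereal_lsc_eventually_greater[OF assms(2) \<open>ereal a < f d\<close>]
      unfolding eventually_nhds_metric by blast
    define \<epsilon> where "\<epsilon> = min \<delta> ((a - (d * p - c)) / (\<bar>p\<bar> + 1))"
    have "0 < \<epsilon>" using \<open>0 < \<delta>\<close> \<open>d * p - c < a\<close> by (simp add: \<epsilon>_def)
    then obtain x y where y: "f x = ereal y" and "\<bar>x - d\<bar> < \<epsilon>" and gap: "y - x * p + c < \<epsilon>"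
      using cconj_right_deriv_near_maximizer[OF proper deriv fp] by blast
    have "a < y" using \<delta>[of x] y \<open>\<bar>x - d\<bar> < \<epsilon>\<close> by (simp add: \<epsilon>_def dist_real_def)
    have "(x - d) * p \<le> \<bar>x - d\<bar> * \<bar>p\<bar>" by (metis abs_ge_self abs_mult)
    also have "\<dots> \<le> \<epsilon> * \<bar>p\<bar>" using \<open>\<bar>x - d\<bar> < \<epsilon>\<close> by (intro mult_right_mono) auto
    finally have "(x - d) * p \<le> \<epsilon> * \<bar>p\<bar>" .
    moreover have "\<epsilon> * (\<bar>p\<bar> + 1) \<le> a - (d * p - c)"
      using \<open>d * p - c < a\<close> by (simp add: \<epsilon>_def pos_le_divide_eq min_mult_distrib_right)
    ultimately show False using \<open>a < y\<close> gap by (simp add: algebra_simps)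
  qed
  from ge le have "f d = ereal (d * p - c)" by simp
  with fp show ?thesis by simp
qed

lemma PhiD:
  assumes "\<phi> \<in> Phi"
  shows "ereal_proper \<phi>" and "ereal_lsc \<phi>" and "ereal_convex \<phi>" and "\<phi> 1 = 0"
    and "0 \<le> x \<Longrightarrow> \<phi> x = ereal (real_of_ereal (\<phi> x))"
  using assms by (auto simp: Phi_def ereal_real)

lemma Phi_affine_lower_bound:
  assumes "\<phi> \<in> Phi"
  obtains K where "\<And>x. 0 \<le> x \<Longrightarrow> - (K * (x + 1)) \<le> real_of_ereal (\<phi> x)"
proof
  let ?r = "\<lambda>x. real_of_ereal (\<phi> x)"
  define A B where "A = ?r 0" and "B = ?r 2"
  have fin: "\<phi> x = ereal (?r x)" if "0 \<le> x" for x using PhiD(5)[OF assms that] .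
  have \<phi>0: "\<phi> 0 = ereal A" and \<phi>2: "\<phi> 2 = ereal B" unfolding A_def B_def using fin by simp_all
  have \<phi>1: "\<phi> 1 = ereal 0" using PhiD(4)[OF assms] by simp
  fix x :: real assume "0 \<le> x"
  have split: "(\<bar>A\<bar> + \<bar>B\<bar>) * (x + 1) = (x + 1) * \<bar>A\<bar> + (x + 1) * \<bar>B\<bar>"
    by (simp add: algebra_simps)
  have "0 \<le> (x + 1) * \<bar>A\<bar>" "0 \<le> (x + 1) * \<bar>B\<bar>" using \<open>0 \<le> x\<close> by simp_all
  show "- ((\<bar>A\<bar> + \<bar>B\<bar>) * (x + 1)) \<le> ?r x"
  proof (cases "1 \<le> x")
    case True
    have "(x - 0) * 0 \<le> (x - 1) * A + (1 - 0) * ?r x"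
      by (rule ereal_convex_three_point[OF PhiD(3)[OF assms] \<phi>0 \<phi>1 fin[of x]]) (use True in auto)
    moreover have "(x - 1) * A \<le> (x - 1) * \<bar>A\<bar>"
      by (rule mult_left_mono[OF abs_ge_self]) (use True in simp)
    moreover have "(x - 1) * \<bar>A\<bar> \<le> (x + 1) * \<bar>A\<bar>" by (intro mult_right_mono) auto
    ultimately show ?thesis using split \<open>0 \<le> (x + 1) * \<bar>B\<bar>\<close> by simp
  next
    case False
    have "(2 - x) * 0 \<le> (2 - 1) * ?r x + (1 - x) * B"
      by (rule ereal_convex_three_point[OF PhiD(3)[OF assms] fin[of x] \<phi>1 \<phi>2])
        (use False \<open>0 \<le> x\<close> in auto)
    moreover have "(1 - x) * B \<le> (1 - x) * \<bar>B\<bar>"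
      by (rule mult_left_mono[OF abs_ge_self]) (use False in simp)
    moreover have "(1 - x) * \<bar>B\<bar> \<le> (x + 1) * \<bar>B\<bar>" using \<open>0 \<le> x\<close> by (intro mult_right_mono) auto
    ultimately show ?thesis using split \<open>0 \<le> (x + 1) * \<bar>A\<bar>\<close> by simp
  qed
qed

(* For d < 0, convexity of phi on the segment from d to x, which passes through 0, shows
   that 0 is at least as good as any x >= 0. *)
lemma Phi_right_deriv_cconj_maximizer:
  assumes Phi: "\<phi> \<in> Phi" and deriv: "has_right_deriv (cconj \<phi>) p d" and "0 \<le> x"
  shows "x * p - real_of_ereal (\<phi> x) \<le> max 0 d * p - real_of_ereal (\<phi> (max 0 d))"
proof -
  let ?r = "\<lambda>x. real_of_ereal (\<phi> x)"
  have fin: "\<phi> x = ereal (?r x)" if "0 \<le> x" for x using PhiD(5)[OF Phi that] .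
  obtain c where fp: "cconj \<phi> p = ereal c"
    using deriv by (cases "cconj \<phi> p") (auto simp: has_right_deriv_def)
  have "\<phi> d + ereal c = ereal (d * p)"
    using cconj_right_deriv_fenchel_young[OF PhiD(1,2)[OF Phi] deriv] fp by simp
  then have fd: "\<phi> d = ereal (d * p - c)" by (cases "\<phi> d") auto
  have gap: "y * p - ?r y \<le> c" if "0 \<le> y" for y
    using cconj_upper[of y p \<phi>] fp fin[OF that] by (cases "\<phi> y") auto
  show ?thesis
  proof (cases "0 \<le> d")
    case True
    then show ?thesis using gap[OF \<open>0 \<le> x\<close>] fd by simp
  next
    case False
    show ?thesis
    proof (cases "x = 0")
      case False
      with \<open>0 \<le> x\<close> \<open>\<not> 0 \<le> d\<close> have "0 < x - d" by simp
      have "(x - d) * ?r 0 \<le> (x - 0) * (d * p - c) + (0 - d) * ?r x"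
        by (rule ereal_convex_three_point[OF PhiD(3)[OF Phi] fd fin[of 0] fin[of x]])
          (use \<open>\<not> 0 \<le> d\<close> \<open>0 \<le> x\<close> False in auto)
      also have "\<dots> \<le> x * (d * p - (x * p - ?r x)) - d * ?r x"
        using gap[OF \<open>0 \<le> x\<close>] \<open>0 \<le> x\<close> mult_left_mono[of "d * p - c" "d * p - (x * p - ?r x)" x]
        by simp
      also have "\<dots> = (x - d) * (?r x - x * p)" by (simp add: algebra_simps)
      finally have "?r 0 \<le> ?r x - x * p" using \<open>0 < x - d\<close> by simp
      then show ?thesis using \<open>\<not> 0 \<le> d\<close> by simp
    qed (use \<open>\<not> 0 \<le> d\<close> in simp)
  qed
qed

lemma cconj_scaled_phi_up_lower:
  assumes "\<phi> \<in> Phi" and "0 \<le> x"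
  shows "ereal (x * y - \<gamma> * real_of_ereal (\<phi> x)) \<le> cconj (\<lambda>x. ereal \<gamma> * phi_up \<phi> x) y"
  using cconj_upper[of x y "\<lambda>x. ereal \<gamma> * phi_up \<phi> x"] PhiD(5)[OF assms] \<open>0 \<le> x\<close>
  by (cases "\<phi> x") (auto simp: phi_up_def)

lemma cconj_scaled_phi_up_eq:
  assumes Phi: "\<phi> \<in> Phi" and "0 < \<gamma>" and "right_deriv_exists (cconj \<phi>) (y / \<gamma>)"
  defines "r \<equiv> max 0 (right_deriv (cconj \<phi>) (y / \<gamma>))"
  shows "cconj (\<lambda>x. ereal \<gamma> * phi_up \<phi> x) y = ereal (r * y - \<gamma> * real_of_ereal (\<phi> r))"
proof (rule antisym)
  obtain d where deriv: "has_right_deriv (cconj \<phi>) (y / \<gamma>) d"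
    using assms(3) by (auto simp: right_deriv_exists_def)
  then have r: "r = max 0 d" by (simp add: r_def right_deriv_eqI)
  show "cconj (\<lambda>x. ereal \<gamma> * phi_up \<phi> x) y \<le> ereal (r * y - \<gamma> * real_of_ereal (\<phi> r))"
  proof (rule cconj_le_ereal)
    show "ereal \<gamma> * phi_up \<phi> x \<noteq> -\<infinity>" for x
      using PhiD(1)[OF Phi] \<open>0 < \<gamma>\<close> by (cases "\<phi> x") (auto simp: phi_up_def ereal_proper_def)
  next
    fix x c assume c: "ereal \<gamma> * phi_up \<phi> x = ereal c"
    then have "0 \<le> x" using \<open>0 < \<gamma>\<close> by (auto simp: phi_up_def split: if_splits)
    with c have "c = \<gamma> * real_of_ereal (\<phi> x)"
      using PhiD(5)[OF Phi \<open>0 \<le> x\<close>] by (cases "\<phi> x") (auto simp: phi_up_def)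
    moreover have "\<gamma> * (x * (y / \<gamma>) - real_of_ereal (\<phi> x)) \<le> \<gamma> * (r * (y / \<gamma>) - real_of_ereal (\<phi> r))"
      using Phi_right_deriv_cconj_maximizer[OF Phi deriv \<open>0 \<le> x\<close>] \<open>0 < \<gamma>\<close> r by simp
    ultimately show "x * y - c \<le> r * y - \<gamma> * real_of_ereal (\<phi> r)"
      using \<open>0 < \<gamma>\<close> by (simp add: algebra_simps)
  qed
qed (rule cconj_scaled_phi_up_lower[OF Phi], simp add: r_def)

section \<open>Extended-valued expectations and the objective\<close>

lemma enn2ereal_eq_ereal_enn2real: "x \<noteq> \<infinity> \<Longrightarrow> enn2ereal x = ereal (enn2real x)"
  by (cases x) (auto simp: enn2real_def)

lemma qint_real:
  assumes "integrable M f"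
  shows "qint M (\<lambda>z. ereal (f z)) = ereal (integral\<^sup>L M f)"
proof -
  have "(\<integral>\<^sup>+ z. ennreal (f z) \<partial>M) \<noteq> \<infinity>" and "(\<integral>\<^sup>+ z. ennreal (- f z) \<partial>M) \<noteq> \<infinity>"
    using integrableD[OF assms] by auto
  then show ?thesis
    unfolding qint_def real_lebesgue_integral_def[OF assms]
    by (simp add: enn2ereal_eq_ereal_enn2real)
qed

lemma qint_cong_AE:
  assumes "AE z in M. f z = g z"
  shows "qint M f = qint M g"
proof -
  have "(\<integral>\<^sup>+ z. e2ennreal (f z) \<partial>M) = (\<integral>\<^sup>+ z. e2ennreal (g z) \<partial>M)"
    and "(\<integral>\<^sup>+ z. e2ennreal (- f z) \<partial>M) = (\<integral>\<^sup>+ z. e2ennreal (- g z) \<partial>M)"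
    using assms by (auto intro: nn_integral_cong_AE)
  then show ?thesis unfolding qint_def by simp
qed

lemma integrable_real_lower_bounded:
  fixes f h :: "'a \<Rightarrow> real"
  assumes "f \<in> borel_measurable M" and "(\<integral>\<^sup>+ z. ennreal (f z) \<partial>M) < \<infinity>"
    and "integrable M h" and "AE z in M. - h z \<le> f z"
  shows "integrable M f"
proof (rule integrableI_bounded)
  have "(\<integral>\<^sup>+ z. ennreal (norm (f z)) \<partial>M) \<le> (\<integral>\<^sup>+ z. ennreal (f z) + ennreal \<bar>h z\<bar> \<partial>M)"
    using assms(4)
  proof (intro nn_integral_mono_AE, eventually_elim)
    case (elim z)
    show ?case
    proof (cases "0 \<le> f z")
      case False
      with elim have "ennreal (norm (f z)) \<le> ennreal \<bar>h z\<bar>" by (intro ennreal_leI) auto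
      then show ?thesis by (simp add: add_increasing)
    qed (simp add: add_increasing2)
  qed
  also have "\<dots> = (\<integral>\<^sup>+ z. ennreal (f z) \<partial>M) + (\<integral>\<^sup>+ z. ennreal \<bar>h z\<bar> \<partial>M)"
    using assms(1,3) by (intro nn_integral_add) auto
  also have "\<dots> < \<infinity>"
    using assms(2,3) by (simp add: integrable_iff_bounded)
  finally show "(\<integral>\<^sup>+ z. ennreal (norm (f z)) \<partial>M) < \<infinity>" .
qed (fact assms(1))

lemma qint_top_or_integrable:
  fixes f h :: "'a \<Rightarrow> real"
  assumes "f \<in> borel_measurable M" and "integrable M h" and "AE z in M. - h z \<le> f z"
  shows "qint M (\<lambda>z. ereal (f z)) = \<infinity> \<or> integrable M f"
proof (cases "(\<integral>\<^sup>+ z. ennreal (f z) \<partial>M) = \<infinity>")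
  case True
  then show ?thesis by (simp add: qint_def)
next
  case False
  then show ?thesis
    using integrable_real_lower_bounded[OF assms(1) _ assms(2,3)] by (simp add: top.not_eq_extremum)
qed

lemma phi_div_density:
  assumes "sigma_finite_measure M" and "\<phi> \<in> Phi"
    and "\<rho> \<in> borel_measurable M" and "\<forall>z\<in>space M. 0 \<le> \<rho> z"
  shows "phi_div \<phi> (density M (\<lambda>z. ennreal (\<rho> z))) M =
         qint M (\<lambda>z. ereal (real_of_ereal (\<phi> (\<rho> z))))"
  unfolding phi_div_def
proof (rule qint_cong_AE)
  interpret sigma_finite_measure M by fact
  have "AE z in M. ennreal (\<rho> z) = RN_deriv M (density M (\<lambda>z. ennreal (\<rho> z))) z"
    using assms(3) by (intro RN_deriv_unique) auto
  moreover have "AE z in M. 0 \<le> \<rho> z" using assms(4) by (auto intro: AE_I2)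
  ultimately show "AE z in M. \<phi> (enn2real (RN_deriv M (density M (\<lambda>z. ennreal (\<rho> z))) z)) =
      ereal (real_of_ereal (\<phi> (\<rho> z)))"
  proof eventually_elim
    case (elim z)
    then have "enn2real (RN_deriv M (density M (\<lambda>z. ennreal (\<rho> z))) z) = \<rho> z"
      by (simp flip: elim(1))
    then show ?case using PhiD(5)[OF assms(2) elim(2)] by simp
  qed
qed

lemma feasible_ratio_integral:
  assumes "feasible_ratio P \<sigma>"
  shows "integrable P \<sigma>" and "integral\<^sup>L P \<sigma> = 1"
proof -
  have "\<sigma> \<in> borel_measurable P" and "AE z in P. 0 \<le> \<sigma> z"
    and "(\<integral>\<^sup>+ z. ennreal (\<sigma> z) \<partial>P) = ennreal 1"
    using assms unfolding feasible_ratio_def by (auto intro: AE_I2)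
  then show "integrable P \<sigma>" and "integral\<^sup>L P \<sigma> = 1"
    using nn_integral_eq_integrable[of \<sigma> P 1] by simp_all
qed

lemma objective_integrable:
  assumes "sigma_finite_measure P" and "\<phi> \<in> Phi" and "feasible_ratio P \<sigma>"
    and "integrable P (\<lambda>z. \<sigma> z * L z)" and "integrable P (\<lambda>z. real_of_ereal (\<phi> (\<sigma> z)))"
  shows "objective P L \<gamma> \<phi> \<sigma> = ereal (\<integral>z. \<sigma> z * L z + \<gamma> * real_of_ereal (\<phi> (\<sigma> z)) \<partial>P)"
  using assms(3-5)
  by (simp add: objective_def feasible_ratio_def phi_div_density[OF assms(1,2)] qint_real)

(* Weak duality. Each of the two parts of the objective is bounded below by an integrable
   function, so either it is integrable or the objective is +infinity. *)
lemma objective_lower_bound: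
  assumes "prob_space P" and Phi: "\<phi> \<in> Phi" and "0 < \<gamma>" and [measurable]: "L \<in> borel_measurable P"
    and "integrable P G" and G_max: "AE z in P. \<forall>x\<ge>0. x * (b - L z) - \<gamma> * real_of_ereal (\<phi> x) \<le> G z"
    and feasible: "feasible_ratio P \<sigma>"
  shows "ereal (b - integral\<^sup>L P G) \<le> objective P L \<gamma> \<phi> \<sigma>"
proof -
  interpret prob_space P by fact
  let ?u = "\<lambda>z. \<sigma> z * L z" and ?v = "\<lambda>z. real_of_ereal (\<phi> (\<sigma> z))"
  note [measurable] = ereal_lsc_borel[OF PhiD(2)[OF Phi]]
  have [measurable]: "\<sigma> \<in> borel_measurable P" and \<sigma>_nonneg: "\<forall>z\<in>space P. 0 \<le> \<sigma> z"
    using feasible by (auto simp: feasible_ratio_def)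
  note \<sigma>_int = feasible_ratio_integral[OF feasible]
  have obj: "objective P L \<gamma> \<phi> \<sigma> = qint P (\<lambda>z. ereal (?u z)) + ereal \<gamma> * qint P (\<lambda>z. ereal (?v z))"
    unfolding objective_def
    using phi_div_density[OF prob_space_imp_sigma_finite[OF assms(1)] Phi _ \<sigma>_nonneg] by simp
  obtain K where K: "\<And>x. 0 \<le> x \<Longrightarrow> - (K * (x + 1)) \<le> real_of_ereal (\<phi> x)"
    using Phi_affine_lower_bound[OF Phi] by blast
  have "qint P (\<lambda>z. ereal (?v z)) = \<infinity> \<or> integrable P ?v"
    using \<sigma>_int \<sigma>_nonneg K by (intro qint_top_or_integrable[where h="\<lambda>z. K * (\<sigma> z + 1)"]) auto
  then show ?thesis
  proof
    assume "integrable P ?v"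
    have pointwise: "AE z in P. \<sigma> z * b - G z \<le> ?u z + \<gamma> * ?v z"
      using G_max
    proof (rule AE_mp, intro AE_I2 impI)
      fix z assume "z \<in> space P" and "\<forall>x\<ge>0. x * (b - L z) - \<gamma> * real_of_ereal (\<phi> x) \<le> G z"
      then have "\<sigma> z * (b - L z) - \<gamma> * ?v z \<le> G z" using \<sigma>_nonneg by blast
      then show "\<sigma> z * b - G z \<le> ?u z + \<gamma> * ?v z" by (simp add: algebra_simps)
    qed
    have "qint P (\<lambda>z. ereal (?u z)) = \<infinity> \<or> integrable P ?u"
    proof (rule qint_top_or_integrable[where h="\<lambda>z. \<bar>b\<bar> * \<sigma> z + \<gamma> * \<bar>?v z\<bar> + \<bar>G z\<bar>"])
      show "integrable P (\<lambda>z. \<bar>b\<bar> * \<sigma> z + \<gamma> * \<bar>?v z\<bar> + \<bar>G z\<bar>)"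
        using \<sigma>_int \<open>integrable P ?v\<close> \<open>integrable P G\<close>
        by (intro Bochner_Integration.integrable_add integrable_mult_right integrable_abs) auto
      show "AE z in P. - (\<bar>b\<bar> * \<sigma> z + \<gamma> * \<bar>?v z\<bar> + \<bar>G z\<bar>) \<le> ?u z"
        using pointwise
      proof (rule AE_mp, intro AE_I2 impI)
        fix z assume "z \<in> space P" and "\<sigma> z * b - G z \<le> ?u z + \<gamma> * ?v z"
        moreover have "0 \<le> \<sigma> z * (\<bar>b\<bar> + b)"
          using \<sigma>_nonneg \<open>z \<in> space P\<close> by (intro mult_nonneg_nonneg) auto
        moreover have "\<gamma> * ?v z \<le> \<gamma> * \<bar>?v z\<bar>"
          by (rule mult_left_mono[OF abs_ge_self]) (use \<open>0 < \<gamma>\<close> in simp)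
        ultimately show "- (\<bar>b\<bar> * \<sigma> z + \<gamma> * \<bar>?v z\<bar> + \<bar>G z\<bar>) \<le> ?u z"
          using abs_ge_self[of "G z"] by (simp add: algebra_simps)
      qed
    qed simp
    then show ?thesis
    proof
      assume "integrable P ?u"
      have "b - integral\<^sup>L P G = (\<integral>z. \<sigma> z * b - G z \<partial>P)"
        using \<sigma>_int \<open>integrable P G\<close> by simp
      also have "\<dots> \<le> (\<integral>z. ?u z + \<gamma> * ?v z \<partial>P)"
        using \<sigma>_int \<open>integrable P G\<close> \<open>integrable P ?u\<close> \<open>integrable P ?v\<close> pointwise
        by (intro integral_mono_AE) auto
      finally show ?thesis
        using objective_integrable[OF prob_space_imp_sigma_finite[OF assms(1)] Phi feasible]
          \<open>integrable P ?u\<close> \<open>integrable P ?v\<close> by simp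
    qed (simp add: obj)
  qed (use \<open>0 < \<gamma>\<close> in \<open>simp add: obj\<close>)
qed

lemma objective_eq_dual_value:
  assumes "prob_space P" and Phi: "\<phi> \<in> Phi" and [measurable]: "L \<in> borel_measurable P"
    and feasible: "feasible_ratio P \<rho>"
    and G_int: "integrable P (\<lambda>z. \<rho> z * (b - L z) - \<gamma> * real_of_ereal (\<phi> (\<rho> z)))"
    and v_int: "integrable P (\<lambda>z. real_of_ereal (\<phi> (\<rho> z)))"
  shows "objective P L \<gamma> \<phi> \<rho> =
    ereal (b - (\<integral>z. \<rho> z * (b - L z) - \<gamma> * real_of_ereal (\<phi> (\<rho> z)) \<partial>P))"
proof -
  interpret prob_space P by fact
  let ?G = "\<lambda>z. \<rho> z * (b - L z) - \<gamma> * real_of_ereal (\<phi> (\<rho> z))"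
  note \<rho>_int = feasible_ratio_integral[OF feasible]
  have \<rho>L: "(\<lambda>z. \<rho> z * L z) = (\<lambda>z. \<rho> z * b - ?G z - \<gamma> * real_of_ereal (\<phi> (\<rho> z)))"
    by (simp add: fun_eq_iff algebra_simps)
  have "integrable P (\<lambda>z. \<rho> z * b - ?G z - \<gamma> * real_of_ereal (\<phi> (\<rho> z)))"
    by (rule Bochner_Integration.integrable_diff[OF Bochner_Integration.integrable_diff
          [OF integrable_mult_left[OF \<rho>_int(1)] G_int] integrable_mult_right[OF v_int]])
  then have "integrable P (\<lambda>z. \<rho> z * L z)" by (simp only: \<rho>L)
  then have "objective P L \<gamma> \<phi> \<rho> = ereal (\<integral>z. \<rho> z * L z + \<gamma> * real_of_ereal (\<phi> (\<rho> z)) \<partial>P)"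
    by (intro objective_integrable[OF prob_space_imp_sigma_finite[OF assms(1)] Phi feasible _ v_int])
  also have "(\<integral>z. \<rho> z * L z + \<gamma> * real_of_ereal (\<phi> (\<rho> z)) \<partial>P) = (\<integral>z. \<rho> z * b - ?G z \<partial>P)"
    by (simp add: algebra_simps)
  also have "\<dots> = b - integral\<^sup>L P ?G"
    using \<rho>_int G_int by simp
  finally show ?thesis .
qed

lemma optimal_ratioI:
  assumes "prob_space P" and "\<phi> \<in> Phi" and "0 < \<gamma>" and "L \<in> borel_measurable P"
    and "feasible_ratio P \<rho>"
    and "integrable P (\<lambda>z. \<rho> z * (b - L z) - \<gamma> * real_of_ereal (\<phi> (\<rho> z)))"
    and "integrable P (\<lambda>z. real_of_ereal (\<phi> (\<rho> z)))"
    and "AE z in P. \<forall>x\<ge>0. x * (b - L z) - \<gamma> * real_of_ereal (\<phi> x) \<le>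
      \<rho> z * (b - L z) - \<gamma> * real_of_ereal (\<phi> (\<rho> z))"
  shows "optimal_ratio P L \<gamma> \<phi> \<rho>"
  using objective_eq_dual_value[OF assms(1,2,4-7)] objective_lower_bound[OF assms(1-4,6,8)] assms(5)
  by (simp add: optimal_ratio_def)

lemma conjugate_dual_integrable:
  fixes \<rho> L :: "'a \<Rightarrow> real"
  assumes "prob_space P" and Phi: "\<phi> \<in> Phi" and "0 < \<gamma>"
    and [measurable]: "\<rho> \<in> borel_measurable P" "L \<in> borel_measurable P"
    and \<psi>_eq: "AE z in P. cconj (\<lambda>x. ereal \<gamma> * phi_up \<phi> x) (b - L z) =
      ereal (\<rho> z * (b - L z) - \<gamma> * real_of_ereal (\<phi> (\<rho> z)))"
    and \<psi>_finite: "(\<integral>\<^sup>+ z. e2ennreal (cconj (\<lambda>x. ereal \<gamma> * phi_up \<phi> x) (b - L z)) \<partial>P) < \<infinity>"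
    and gap_finite: "(\<integral>\<^sup>+ z. e2ennreal \<bar>cconj (\<lambda>x. ereal \<gamma> * phi_up \<phi> x) (b - L z)
      - ereal (\<rho> z * (b - L z))\<bar> \<partial>P) < \<infinity>"
  shows "integrable P (\<lambda>z. \<rho> z * (b - L z) - \<gamma> * real_of_ereal (\<phi> (\<rho> z)))"
    and "integrable P (\<lambda>z. real_of_ereal (\<phi> (\<rho> z)))"
proof -
  interpret prob_space P by fact
  let ?\<psi> = "cconj (\<lambda>x. ereal \<gamma> * phi_up \<phi> x)"
  define G where "G z = \<rho> z * (b - L z) - \<gamma> * real_of_ereal (\<phi> (\<rho> z))" for z
  note [measurable] = ereal_lsc_borel[OF PhiD(2)[OF Phi]]
  have [measurable]: "G \<in> borel_measurable P" unfolding G_def[abs_def] by measurable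
  show "integrable P (\<lambda>z. \<rho> z * (b - L z) - \<gamma> * real_of_ereal (\<phi> (\<rho> z)))"
    unfolding G_def[symmetric]
  proof (rule integrable_real_lower_bounded[where h="\<lambda>_. \<gamma> * real_of_ereal (\<phi> 0)"])
    have "(\<integral>\<^sup>+ z. ennreal (G z) \<partial>P) = (\<integral>\<^sup>+ z. e2ennreal (?\<psi> (b - L z)) \<partial>P)"
      using \<psi>_eq by (intro nn_integral_cong_AE) (simp add: G_def eventually_mono)
    with \<psi>_finite show "(\<integral>\<^sup>+ z. ennreal (G z) \<partial>P) < \<infinity>" by simp
    show "AE z in P. - (\<gamma> * real_of_ereal (\<phi> 0)) \<le> G z"
      using \<psi>_eq
    proof eventually_elim
      case (elim z)
      with cconj_scaled_phi_up_lower[OF Phi, of 0 "b - L z" \<gamma>] show ?case by (simp add: G_def)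
    qed
  qed auto
  have "integrable P (\<lambda>z. \<gamma> * real_of_ereal (\<phi> (\<rho> z)))"
  proof (rule integrableI_bounded)
    have "(\<integral>\<^sup>+ z. ennreal (norm (\<gamma> * real_of_ereal (\<phi> (\<rho> z)))) \<partial>P) =
        (\<integral>\<^sup>+ z. e2ennreal \<bar>?\<psi> (b - L z) - ereal (\<rho> z * (b - L z))\<bar> \<partial>P)"
    proof (rule nn_integral_cong_AE)
      show "AE z in P. ennreal (norm (\<gamma> * real_of_ereal (\<phi> (\<rho> z)))) =
          e2ennreal \<bar>?\<psi> (b - L z) - ereal (\<rho> z * (b - L z))\<bar>"
        using \<psi>_eq
      proof eventually_elim
        case (elim z)
        have "\<bar>G z - \<rho> z * (b - L z)\<bar> = \<gamma> * \<bar>real_of_ereal (\<phi> (\<rho> z))\<bar>"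
          using \<open>0 < \<gamma>\<close> by (simp add: G_def abs_mult)
        with elim \<open>0 < \<gamma>\<close> show ?case by (simp add: G_def[symmetric] abs_mult)
      qed
    qed
    with gap_finite show "(\<integral>\<^sup>+ z. ennreal (norm (\<gamma> * real_of_ereal (\<phi> (\<rho> z)))) \<partial>P) < \<infinity>"
      by simp
  qed measurable
  with \<open>0 < \<gamma>\<close> show "integrable P (\<lambda>z. real_of_ereal (\<phi> (\<rho> z)))" by simp
qed

theorem theorem3:
  fixes P :: "'a measure" and L :: "'a \<Rightarrow> real" and \<gamma> :: real
    and \<phi> :: "real \<Rightarrow> ereal" and b :: real
  assumes "prob_space P"
    and "L \<in> borel_measurable P"
    and "\<gamma> > 0"
    and "\<phi> \<in> Phi"
    and "(\<integral>\<^sup>+ z. e2ennreal (cconj (\<lambda>x. ereal \<gamma> * phi_up \<phi> x) (b - L z)) \<partial>P) < \<infinity>"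
    and "AE z in P. right_deriv_exists (cconj \<phi>) ((b - L z) / \<gamma>)"
    and "(\<integral>\<^sup>+ z. e2ennreal \<bar>cconj (\<lambda>x. ereal \<gamma> * phi_up \<phi> x) (b - L z)
            - ereal (max 0 (right_deriv (cconj \<phi>) ((b - L z) / \<gamma>)) * (b - L z))\<bar> \<partial>P) < \<infinity>"
    and "(\<integral>\<^sup>+ z. ennreal (max 0 (right_deriv (cconj \<phi>) ((b - L z) / \<gamma>))) \<partial>P) = 1"
  shows "optimal_ratio P L \<gamma> \<phi> (\<lambda>z. max 0 (right_deriv (cconj \<phi>) ((b - L z) / \<gamma>)))"
proof -
  define \<rho> where "\<rho> = (\<lambda>z. max 0 (right_deriv (cconj \<phi>) ((b - L z) / \<gamma>)))"
  note [measurable] = assms(2) right_deriv_cconj_borel[OF PhiD(1)[OF assms(4)]]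
  have [measurable]: "\<rho> \<in> borel_measurable P" unfolding \<rho>_def by measurable
  have feasible: "feasible_ratio P \<rho>"
    using assms(8) by (simp add: feasible_ratio_def \<rho>_def)
  have \<psi>_eq: "AE z in P. cconj (\<lambda>x. ereal \<gamma> * phi_up \<phi> x) (b - L z) =
      ereal (\<rho> z * (b - L z) - \<gamma> * real_of_ereal (\<phi> (\<rho> z)))"
    using assms(6) by (rule eventually_mono) (simp add: \<rho>_def cconj_scaled_phi_up_eq[OF assms(4,3)])
  have "AE z in P. \<forall>x\<ge>0. x * (b - L z) - \<gamma> * real_of_ereal (\<phi> x) \<le>
      \<rho> z * (b - L z) - \<gamma> * real_of_ereal (\<phi> (\<rho> z))"
    using \<psi>_eq
  proof eventually_elim
    case (elim z)
    with cconj_scaled_phi_up_lower[OF assms(4), of _ "b - L z" \<gamma>] show ?case by simp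
  qed
  with conjugate_dual_integrable[OF assms(1,4,3) \<open>\<rho> \<in> borel_measurable P\<close> assms(2) \<psi>_eq assms(5)]
    assms(7) feasible have "optimal_ratio P L \<gamma> \<phi> \<rho>"
    by (intro optimal_ratioI[OF assms(1,4,3,2)]) (simp_all add: \<rho>_def)
  then show ?thesis by (simp add: \<rho>_def)
qed

end
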